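(* Let $\pi\colon\mathsf{States}\to\mathbb{R}_{\ge0}$ be a potential function. Then $\mathsf{aert}_\pi$ is $\omega$-continuous: for every program $C$ and every $\omega$-chain $F=\{X_1\preceq X_2\preceq\cdots\}$ in $\mathbb{A}_\pi$, $$\mathsf{aert}_\pi[\![C]\!](\sup F)\;=\;\sup\{\mathsf{aert}_\pi[\![C]\!](X)\mid X\in F\}.$$
   Context: States and programs. Fix a finite set $\mathrm{Vars}$ of variables; values are $\mathbb{N}$, locations are $\mathbb{N}_{>0}$. A stack is $s\colon \mathrm{Vars}\to\mathbb{N}$; a heap is a partial map $h$ from a finite set $\mathrm{dom}(h)\subseteq\mathbb{N}_{>0}$ to $\mathbb{N}$. $h_1\perp h_2$ means disjoint domains; then $h_1\star h_2$ is their union; $h_\emptyset$ is the empty heap. $\mathsf{States}$ is the set of pairs $(s,h)$. $s(e)$ is the value of a (heap-independent) arithmetic expression $e$ under $s$, $s\models\varphi$ means the Boolean expression $\varphi$ holds under $s$, $s[x\mapsto v]$ is the updated stack. Programs are generated by $C ::= \mathtt{tick}(e) \mid x:=e \mid x:=\mathtt{alloc}(e) \mid \langle e\rangle:=e' \mid x:=\langle e\rangle \mid \mathtt{free}(e) \mid \{C\}[p]\{C\} \mid \mathtt{if}(\varphi)\{C\}\mathtt{else}\{C\} \mid C;C \mid \mathtt{while}(\varphi)\{C\}$, where $p$ is an expression with $s(p)\in[0,1]\cap\mathbb{Q}$ for all $s$. The statements other than tick, probabilistic choice, conditional, sequencing and loops are called atomic. Runtimes. $\mathbb{T}$ is the set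 of functions $\mathsf{States}\to[0,\infty]$, ordered pointwise by $\preceq$; arithmetic is pointwise with $0\cdot\infty=0$. $[\varphi]$ is the $0/1$-valued Iverson bracket. Truncated subtraction: $a\dot- b=\max(a-b,0)$, $\infty\dot- b=\infty$ for finite $b$, $a\dot-\infty=0$. $(f\oplus g)(s,h)=\min\{f(s,h_1)+g(s,h_2)\mid h=h_1\star h_2\}$; $(f \mathbin{-\!\!\ominus} g)(s,h)=\sup\{g(s,h\star h')\dot- f(s,h')\mid h'\perp h\}$; $(\inf y\colon f)(s,h)=\inf_{v\in\mathbb{N}} f(s[y\mapsto v],h)$, $(\sup y\colon f)(s,h)=\sup_{v\in\mathbb{N}}f(s[y\mapsto v],h)$; $f[x/e](s,h)=f(s[x\mapsto s(e)],h)$. $\mathsf{tm}(e)(s,h)=s(e)$ if $h=h_\emptyset$, else $\infty$; $[e\mapsto e'](s,h)=0$ if $\mathrm{dom}(h)=\{s(e)\}$ and $h(s(e))=s(e')$, else $\infty$; $[e\mapsto -](s,h)=0$ if $\mathrm{dom}(h)=\{s(e)\}$, else $\infty$; $\bigoplus_{i=1}^{e} f_i$ is the separating sum over $i=1,\dots,s(e)$ (empty one: $[\mathsf{emp}]$, which is $0$ if $h=h_\emptyset$, else $\infty$). $\mathsf{ert}[\![C]\!]\colon\mathbb{T}\to\mathbb{T}$ (with $v$ fresh): $\mathsf{ert}[\![\mathtt{tick}(e)]\!](f)=\mathsf{tm}(e)\oplus f$; $\mathsf{ert}[\![x:=e]\!](f)=f[x/e]$; $\mathsf{ert}[\![x:=\mathtt{alloc}(e)]\!](f)=\sup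 v\colon (\bigoplus_{i=1}^{e}[v+i-1\mapsto 0])\mathbin{-\!\!\ominus} f[x/v]$; $\mathsf{ert}[\![\langle e\rangle:=e']\!](f)=[e\mapsto-]\oplus([e\mapsto e']\mathbin{-\!\!\ominus} f)$; $\mathsf{ert}[\![x:=\langle e\rangle]\!](f)=\inf v\colon [e\mapsto v]\oplus([e\mapsto v]\mathbin{-\!\!\ominus} f[x/v])$; $\mathsf{ert}[\![\mathtt{free}(e)]\!](f)=[e\mapsto-]\oplus f$; $\mathsf{ert}[\![C_1;C_2]\!](f)=\mathsf{ert}[\![C_1]\!](\mathsf{ert}[\![C_2]\!](f))$; conditional: $[\varphi]\cdot\mathsf{ert}[\![C_1]\!](f)+[\neg\varphi]\cdot\mathsf{ert}[\![C_2]\!](f)$; probabilistic choice: $p\cdot\mathsf{ert}[\![C_1]\!](f)+(1-p)\cdot\mathsf{ert}[\![C_2]\!](f)$; $\mathsf{ert}[\![\mathtt{while}(\varphi)\{C\}]\!](f)=\mathrm{lfp}\, g.\ [\neg\varphi]\cdot f+[\varphi]\cdot\mathsf{ert}[\![C]\!](g)$. Amortized runtimes. A potential function is $\pi\colon\mathsf{States}\to\mathbb{R}_{\ge0}$. $\mathbb{A}_\pi=\{X\colon\mathsf{States}\to\mathbb{R}\cup\{\infty\}\mid -\pi\le X\}$, ordered pointwise by $\preceq$ (complete lattice, least element $-\pi$; suprema are pointwise). $\mathsf{aert}_\pi[\![C]\!]\colon\mathbb{A}_\pi\to\mathbb{A}_\pi$: $\mathsf{aert}_\pi[\![\mathtt{tick}(e)]\!](X)=e+X$;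 for atomic $C$ other than tick, $\mathsf{aert}_\pi[\![C]\!](X)=\mathsf{ert}[\![C]\!](X+\pi)-\pi$; sequencing by composition; conditional $[\varphi]\cdot\mathsf{aert}_\pi[\![C_1]\!](X)+[\neg\varphi]\cdot\mathsf{aert}_\pi[\![C_2]\!](X)$; probabilistic choice $p\cdot\mathsf{aert}_\pi[\![C_1]\!](X)+(1-p)\cdot\mathsf{aert}_\pi[\![C_2]\!](X)$; $\mathsf{aert}_\pi[\![\mathtt{while}(\varphi)\{C'\}]\!](X)=\mathrm{lfp}\,Y.\ [\neg\varphi]\cdot X+[\varphi]\cdot\mathsf{aert}_\pi[\![C']\!](Y)$ in $(\mathbb{A}_\pi,\preceq)$. *)

theory Defs
  imports Complex_Main "HOL-Library.Extended_Nonnegative_Real" "HOL-Library.Extended_Real"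
begin

type_synonym 'v stack = "'v \<Rightarrow> nat"

typedef heap = "{h :: nat \<rightharpoonup> nat. finite (dom h) \<and> 0 \<notin> dom h}"
  morphisms hmap Abs_heap
  by (rule exI[of _ Map.empty]) simp

type_synonym 'v state = "'v stack \<times> heap"

type_synonym 'v rt = "'v state \<Rightarrow> ennreal"
type_synonym 'v art = "'v state \<Rightarrow> ereal"

type_synonym 'v aexp = "'v stack \<Rightarrow> nat"
type_synonym 'v bexp = "'v stack \<Rightarrow> bool"
type_synonym 'v pexp = "'v stack \<Rightarrow> rat"

definition hemp :: heap where "hemp = Abs_heap Map.empty"

definition hdisj :: "heap \<Rightarrow> heap \<Rightarrow> bool" where
  "hdisj h1 h2 \<longleftrightarrow> dom (hmap h1) \<inter> dom (hmap h2) = {}"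

definition hunion :: "heap \<Rightarrow> heap \<Rightarrow> heap" where
  "hunion h1 h2 = Abs_heap (hmap h1 ++ hmap h2)"

datatype 'v prog =
    Tick "'v aexp"
  | Assign 'v "'v aexp"
  | Alloc 'v "'v aexp"
  | Store "'v aexp" "'v aexp"
  | Load 'v "'v aexp"
  | Free "'v aexp"
  | PChoice "'v prog" "'v pexp" "'v prog"
  | If "'v bexp" "'v prog" "'v prog"
  | Seq "'v prog" "'v prog"
  | While "'v bexp" "'v prog"

text \<open>Well-formedness: probabilities p satisfy s(p) \<in> [0,1] \<inter> Q for all s (rationality via type rat).\<close>
fun wf_prog :: "'v prog \<Rightarrow> bool" where
  "wf_prog (PChoice C1 p C2) \<longleftrightarrow> (\<forall>s. 0 \<le> p s \<and> p s \<le> 1) \<and> wf_prog C1 \<and> wf_prog C2"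
| "wf_prog (If b C1 C2) \<longleftrightarrow> wf_prog C1 \<and> wf_prog C2"
| "wf_prog (Seq C1 C2) \<longleftrightarrow> wf_prog C1 \<and> wf_prog C2"
| "wf_prog (While b C) \<longleftrightarrow> wf_prog C"
| "wf_prog _ \<longleftrightarrow> True"

definition tsub :: "ennreal \<Rightarrow> ennreal \<Rightarrow> ennreal" where
  "tsub a b = (if b = \<infinity> then 0 else a - b)"

definition sepcon :: "'v rt \<Rightarrow> 'v rt \<Rightarrow> 'v rt" where
  "sepcon f g = (\<lambda>(s, h). Inf {f (s, h1) + g (s, h2) | h1 h2. hdisj h1 h2 \<and> h = hunion h1 h2})"

definition wand :: "'v rt \<Rightarrow> 'v rt \<Rightarrow> 'v rt" where
  "wand f g = (\<lambda>(s, h). Sup {tsub (g (s, hunion h h')) (f (s, h')) | h'. hdisj h' h})"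

text \<open>inf / sup over the value of a fresh variable, rendered as quantification over values.\<close>
definition infv :: "(nat \<Rightarrow> 'v rt) \<Rightarrow> 'v rt" where
  "infv F = (\<lambda>\<sigma>. INF v. F v \<sigma>)"

definition supv :: "(nat \<Rightarrow> 'v rt) \<Rightarrow> 'v rt" where
  "supv F = (\<lambda>\<sigma>. SUP v. F v \<sigma>)"

definition rsubst :: "'v rt \<Rightarrow> 'v \<Rightarrow> 'v aexp \<Rightarrow> 'v rt" where
  "rsubst f x e = (\<lambda>(s, h). f (s(x := e s), h))"

definition tm :: "'v aexp \<Rightarrow> 'v rt" where
  "tm e = (\<lambda>(s, h). if h = hemp then of_nat (e s) else \<infinity>)"

definition pto :: "'v aexp \<Rightarrow> 'v aexp \<Rightarrow> 'v rt" where
  "pto e e' = (\<lambda>(s, h). if dom (hmap h) = {e s} \<and> hmap h (e s) = Some (e' s) then 0 else \<infinity>)"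

definition pto_any :: "'v aexp \<Rightarrow> 'v rt" where
  "pto_any e = (\<lambda>(s, h). if dom (hmap h) = {e s} then 0 else \<infinity>)"

definition emp :: "'v rt" where
  "emp = (\<lambda>(s, h). if h = hemp then 0 else \<infinity>)"

fun bigsep :: "nat \<Rightarrow> (nat \<Rightarrow> 'v rt) \<Rightarrow> 'v rt" where
  "bigsep 0 F = emp"
| "bigsep (Suc n) F = sepcon (bigsep n F) (F (Suc n))"

definition bigsep_e :: "'v aexp \<Rightarrow> (nat \<Rightarrow> 'v rt) \<Rightarrow> 'v rt" where
  "bigsep_e e F = (\<lambda>(s, h). bigsep (e s) F (s, h))"

fun ert :: "'v prog \<Rightarrow> 'v rt \<Rightarrow> 'v rt" where
  "ert (Tick e) f = sepcon (tm e) f"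
| "ert (Assign x e) f = rsubst f x e"
| "ert (Alloc x e) f =
     supv (\<lambda>v. wand (bigsep_e e (\<lambda>i. pto (\<lambda>_. v + i - 1) (\<lambda>_. 0))) (rsubst f x (\<lambda>_. v)))"
| "ert (Store e e') f = sepcon (pto_any e) (wand (pto e e') f)"
| "ert (Load x e) f =
     infv (\<lambda>v. sepcon (pto e (\<lambda>_. v)) (wand (pto e (\<lambda>_. v)) (rsubst f x (\<lambda>_. v))))"
| "ert (Free e) f = sepcon (pto_any e) f"
| "ert (PChoice C1 p C2) f =
     (\<lambda>\<sigma>. ennreal (real_of_rat (p (fst \<sigma>))) * ert C1 f \<sigma>
         + ennreal (1 - real_of_rat (p (fst \<sigma>))) * ert C2 f \<sigma>)"
| "ert (If b C1 C2) f = (\<lambda>\<sigma>. if b (fst \<sigma>) then ert C1 f \<sigma> else ert C2 f \<sigma>)"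
| "ert (Seq C1 C2) f = ert C1 (ert C2 f)"
| "ert (While b C) f = lfp (\<lambda>g \<sigma>. if b (fst \<sigma>) then ert C g \<sigma> else f \<sigma>)"

definition inA :: "('v state \<Rightarrow> real) \<Rightarrow> 'v art \<Rightarrow> bool" where
  "inA \<pi> X \<longleftrightarrow> (\<forall>\<sigma>. - ereal (\<pi> \<sigma>) \<le> X \<sigma>)"

text \<open>Least fixed point in the complete lattice (A_pi, \<le>) (Knaster--Tarski);
  infima in A_pi of nonempty sets are pointwise, the empty infimum is the constant \<infinity>.\<close>
definition lfpA :: "('v state \<Rightarrow> real) \<Rightarrow> ('v art \<Rightarrow> 'v art) \<Rightarrow> 'v art" where
  "lfpA \<pi> \<Phi> = Inf {Y. inA \<pi> Y \<and> \<Phi> Y \<le> Y}"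

definition alift :: "('v state \<Rightarrow> real) \<Rightarrow> ('v rt \<Rightarrow> 'v rt) \<Rightarrow> 'v art \<Rightarrow> 'v art" where
  "alift \<pi> T X = (\<lambda>\<sigma>. enn2ereal (T (\<lambda>\<sigma>'. e2ennreal (X \<sigma>' + ereal (\<pi> \<sigma>'))) \<sigma>) - ereal (\<pi> \<sigma>))"

fun aert :: "('v state \<Rightarrow> real) \<Rightarrow> 'v prog \<Rightarrow> 'v art \<Rightarrow> 'v art" where
  "aert \<pi> (Tick e) X = (\<lambda>\<sigma>. ereal (real (e (fst \<sigma>))) + X \<sigma>)"
| "aert \<pi> (Assign x e) X = alift \<pi> (ert (Assign x e)) X"
| "aert \<pi> (Alloc x e) X = alift \<pi> (ert (Alloc x e)) X"
| "aert \<pi> (Store e e') X = alift \<pi> (ert (Store e e')) X"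
| "aert \<pi> (Load x e) X = alift \<pi> (ert (Load x e)) X"
| "aert \<pi> (Free e) X = alift \<pi> (ert (Free e)) X"
| "aert \<pi> (PChoice C1 p C2) X =
     (\<lambda>\<sigma>. ereal (real_of_rat (p (fst \<sigma>))) * aert \<pi> C1 X \<sigma>
         + ereal (1 - real_of_rat (p (fst \<sigma>))) * aert \<pi> C2 X \<sigma>)"
| "aert \<pi> (If b C1 C2) X = (\<lambda>\<sigma>. if b (fst \<sigma>) then aert \<pi> C1 X \<sigma> else aert \<pi> C2 X \<sigma>)"
| "aert \<pi> (Seq C1 C2) X = aert \<pi> C1 (aert \<pi> C2 X)"
| "aert \<pi> (While b C) X = lfpA \<pi> (\<lambda>Y \<sigma>. if b (fst \<sigma>) then aert \<pi> C Y \<sigma> else X \<sigma>)"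

end

(* For an atomic statement, ert is sup-continuous: substitution, the magic wand and the
   supremum over a fresh value commute with suprema of arbitrary families; separating
   conjunction with a precise assertion (a points-to) splits the heap in at most one way,
   so it is a translation by a constant; and for a load the infimum over the value v
   collapses to the single v stored at e.  Shifting by +pi and -pi preserves continuity.

   Probabilistic choice is where membership in A_pi matters: the values stay above -pi,
   so no -\<infinity> occurs, which would break additivity of suprema (in ereal, \<infinity> + -\<infinity> = \<infinity>).
   For a loop, the induction hypothesis for the body makes the supremum of the least
   fixed points of the approximating functionals a prefixed point of the limit functional. *)

theory Submission
  imports Defs
begin

lemma hmap_hunion: "hmap (hunion h1 h2) = hmap h1 ++ hmap h2"
  unfolding hunion_def using hmap[of h1] hmap[of h2] by (intro Abs_heap_inverse) auto

lemma map_add_restrict_disjoint: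
  assumes "dom m1 \<inter> dom m2 = {}"
  shows "(m1 ++ m2) |` dom m1 = m1" "(m1 ++ m2) |` (- dom m1) = m2"
  using assms by (auto simp: fun_eq_iff restrict_map_def map_add_def split: option.split)

lemma hunion_split_unique:
  assumes "hdisj h1 h2" "hdisj h1' h2'" "hunion h1 h2 = hunion h1' h2'"
    and "dom (hmap h1) = dom (hmap h1')"
  shows "h1 = h1' \<and> h2 = h2'"
proof -
  have "hmap h1 ++ hmap h2 = hmap h1' ++ hmap h2'"
    using assms(3) by (metis hmap_hunion)
  then have "hmap h1 = hmap h1' \<and> hmap h2 = hmap h2'"
    using assms(1,2,4) map_add_restrict_disjoint unfolding hdisj_def by metis
  then show ?thesis by (simp add: hmap_inject)
qed

section \<open>Sup-continuity of the atomic runtime transformers\<close>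

definition precise :: "'v rt \<Rightarrow> bool" where
  "precise F \<longleftrightarrow>
     (\<forall>s h h'. F (s, h) \<noteq> \<infinity> \<longrightarrow> F (s, h') \<noteq> \<infinity> \<longrightarrow> dom (hmap h) = dom (hmap h'))"

lemma precise_pto: "precise (pto e e')"
  unfolding precise_def pto_def by (auto split: if_splits)

lemma precise_pto_any: "precise (pto_any e)"
  unfolding precise_def pto_any_def by (auto split: if_splits)

lemma sepcon_precise_split:
  assumes "precise F" "hdisj h1 h2" "h = hunion h1 h2" "F (s, h1) \<noteq> \<infinity>"
  shows "sepcon F g (s, h) = F (s, h1) + g (s, h2)"
  unfolding sepcon_def
proof (simp, intro antisym Inf_lower Inf_greatest; clarify?)
  show "\<exists>h1' h2'. F (s, h1) + g (s, h2) = F (s, h1') + g (s, h2') \<and>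
      hdisj h1' h2' \<and> h = hunion h1' h2'"
    using assms(2,3) by blast
  fix h1' h2' assume split': "hdisj h1' h2'" "h = hunion h1' h2'"
  show "F (s, h1) + g (s, h2) \<le> F (s, h1') + g (s, h2')"
  proof (cases "F (s, h1') = \<infinity>")
    case False
    then have "dom (hmap h1) = dom (hmap h1')"
      using assms(1,4) unfolding precise_def by blast
    then show ?thesis using hunion_split_unique[OF assms(2) split'(1)] assms(3) split'(2) by simp
  qed simp
qed

lemma sepcon_eq_top:
  assumes "\<And>h1 h2. hdisj h1 h2 \<Longrightarrow> h = hunion h1 h2 \<Longrightarrow> F (s, h1) = \<infinity>"
  shows "sepcon F g (s, h) = \<infinity>"
  unfolding sepcon_def using assms by (auto intro!: Inf_eqI simp: top_unique)

lemma sup_continuous_sepcon: "precise F \<Longrightarrow> sup_continuous (sepcon F)"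
  unfolding sup_continuous_def
proof (intro allI impI ext)
  fix M :: "nat \<Rightarrow> 'a rt" and \<sigma> :: "'a state"
  assume "precise F"
  obtain s h where \<sigma>: "\<sigma> = (s, h)" by fastforce
  show "sepcon F (SUP i. M i) \<sigma> = (SUP i. sepcon F (M i)) \<sigma>"
  proof (cases "\<exists>h1 h2. hdisj h1 h2 \<and> h = hunion h1 h2 \<and> F (s, h1) \<noteq> \<infinity>")
    case True
    then obtain h1 h2 where "hdisj h1 h2" "h = hunion h1 h2" "F (s, h1) \<noteq> \<infinity>" by blast
    then show ?thesis
      using sepcon_precise_split[OF \<open>precise F\<close>] unfolding \<sigma>
      by (simp add: image_comp ennreal_SUP_add_right)
  qed (simp add: \<sigma> sepcon_eq_top image_comp)
qed

lemma tsub_SUP: "tsub (SUP i\<in>I. f i) b = (SUP i\<in>I. tsub (f i) b)"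
  unfolding tsub_def by (simp add: SUP_diff_ennreal less_top flip: bot_ennreal)

lemma wand_eq_SUP:
  "wand F g (s, h) = (SUP h'\<in>{h'. hdisj h' h}. tsub (g (s, hunion h h')) (F (s, h')))"
  unfolding wand_def by (simp add: setcompr_eq_image image_image)

lemma sup_continuous_wand: "sup_continuous (wand F)"
  unfolding sup_continuous_def
proof (intro allI impI ext)
  fix M :: "nat \<Rightarrow> 'a rt" and \<sigma> :: "'a state"
  obtain s h where \<sigma>: "\<sigma> = (s, h)" by fastforce
  show "wand F (SUP i. M i) \<sigma> = (SUP i. wand F (M i)) \<sigma>"
    unfolding \<sigma> by (simp add: image_comp tsub_SUP wand_eq_SUP) (rule SUP_commute)
qed

lemma sup_continuous_rsubst: "sup_continuous (\<lambda>f. rsubst f x e)"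
  unfolding sup_continuous_def rsubst_def by (simp add: fun_eq_iff image_comp split_beta)

lemma supv_eq_SUP: "supv F = (SUP v. F v)"
  unfolding supv_def by (simp add: fun_eq_iff image_comp)

lemma sup_continuous_supv:
  "(\<And>v. sup_continuous (F v)) \<Longrightarrow> sup_continuous (\<lambda>f. supv (\<lambda>v. F v f))"
  unfolding supv_eq_SUP by (rule sup_continuous_apply_SUP)

lemma sepcon_pto_eq_top:
  assumes "hmap h (e s) \<noteq> Some v"
  shows "sepcon (pto e (\<lambda>_. v)) g (s, h) = \<infinity>"
proof (rule sepcon_eq_top)
  fix h1 h2 assume "hdisj h1 h2" "h = hunion h1 h2"
  then have "hmap h1 (e s) \<noteq> Some v"
    using assms by (auto simp: hmap_hunion hdisj_def map_add_def split: option.splits)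
  then show "pto e (\<lambda>_. v) (s, h1) = \<infinity>" by (simp add: pto_def)
qed

lemma ert_Load_Some:
  assumes "hmap h (e s) = Some v"
  shows "ert (Load x e) f (s, h) =
           sepcon (pto e (\<lambda>_. v)) (wand (pto e (\<lambda>_. v)) (rsubst f x (\<lambda>_. v))) (s, h)"
proof -
  have "sepcon (pto e (\<lambda>_. u)) g (s, h) = \<infinity>" if "u \<noteq> v" for u g
    using assms that by (intro sepcon_pto_eq_top) simp
  then show ?thesis
    by (auto simp: infv_def intro!: antisym INF_lower INF_greatest) (metis order_refl top_greatest)
qed

lemma ert_Load_None: "hmap h (e s) = None \<Longrightarrow> ert (Load x e) f (s, h) = \<infinity>"
  by (simp add: infv_def sepcon_pto_eq_top)

lemma sup_continuous_ert_Load: "sup_continuous (ert (Load x e))"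
proof (rule sup_continuous_fun)
  fix \<sigma> :: "'a state"
  obtain s h where \<sigma>: "\<sigma> = (s, h)" by fastforce
  show "sup_continuous (\<lambda>f. ert (Load x e) f \<sigma>)"
  proof (cases "hmap h (e s)")
    case None
    show ?thesis unfolding \<sigma> ert_Load_None[of h e s, OF None] by (rule sup_continuous_const)
  next
    case (Some v)
    have "sup_continuous (\<lambda>f. sepcon (pto e (\<lambda>_. v)) (wand (pto e (\<lambda>_. v)) (rsubst f x (\<lambda>_. v))))"
      by (intro sup_continuous_compose[OF sup_continuous_sepcon[OF precise_pto]]
          sup_continuous_compose[OF sup_continuous_wand] sup_continuous_rsubst)
    then show ?thesis unfolding \<sigma> ert_Load_Some[of h e s, OF Some] by (rule sup_continuous_applyD)
  qed
qed

fun atomic :: "'v prog \<Rightarrow> bool" where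
  "atomic (Assign x e) = True"
| "atomic (Alloc x e) = True"
| "atomic (Store e e') = True"
| "atomic (Load x e) = True"
| "atomic (Free e) = True"
| "atomic _ = False"

lemma sup_continuous_ert_atomic: "atomic C \<Longrightarrow> sup_continuous (ert C)"
proof (cases C)
  case (Assign x e)
  then have "ert C = (\<lambda>f. rsubst f x e)" by (simp add: fun_eq_iff)
  then show ?thesis by (simp add: sup_continuous_rsubst)
next
  case (Alloc x e)
  then have "ert C = (\<lambda>f. supv (\<lambda>v.
      wand (bigsep_e e (\<lambda>i. pto (\<lambda>_. v + i - 1) (\<lambda>_. 0))) (rsubst f x (\<lambda>_. v))))"
    by (simp add: fun_eq_iff)
  then show ?thesis
    by (simp add: sup_continuous_supv sup_continuous_compose[OF sup_continuous_wand]
        sup_continuous_rsubst)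
next
  case (Store e e')
  then have "ert C = (\<lambda>f. sepcon (pto_any e) (wand (pto e e') f))" by (simp add: fun_eq_iff)
  then show ?thesis
    by (simp add: sup_continuous_compose sup_continuous_sepcon precise_pto_any sup_continuous_wand)
next
  case (Load x e)
  then show ?thesis by (simp add: sup_continuous_ert_Load)
next
  case (Free e)
  then have "ert C = sepcon (pto_any e)" by (simp add: fun_eq_iff)
  then show ?thesis by (simp add: sup_continuous_sepcon precise_pto_any)
qed simp_all

lemma sup_continuous_ereal_add_const: "c \<noteq> -\<infinity> \<Longrightarrow> sup_continuous (\<lambda>x::ereal. x + c)"
  unfolding sup_continuous_def by (simp add: SUP_ereal_add_left)

lemma sup_continuous_alift:
  assumes "sup_continuous T"
  shows "sup_continuous (alift \<pi> T)"
  unfolding alift_def minus_ereal_def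
proof (rule sup_continuous_fun)
  fix \<sigma> :: "'a state"
  have "sup_continuous (\<lambda>X \<sigma>'. e2ennreal (X \<sigma>' + ereal (\<pi> \<sigma>')))"
    by (intro sup_continuous_fun sup_continuous_e2ennreal
        sup_continuous_compose[OF sup_continuous_ereal_add_const sup_continuous_apply]) simp
  from sup_continuous_compose[OF assms this]
  have "sup_continuous (\<lambda>X. enn2ereal (T (\<lambda>\<sigma>'. e2ennreal (X \<sigma>' + ereal (\<pi> \<sigma>'))) \<sigma>))"
    by (rule sup_continuous_enn2ereal[OF sup_continuous_applyD])
  then show "sup_continuous
      (\<lambda>X. enn2ereal (T (\<lambda>\<sigma>'. e2ennreal (X \<sigma>' + ereal (\<pi> \<sigma>'))) \<sigma>) + - ereal (\<pi> \<sigma>))"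
    by (rule sup_continuous_compose[OF sup_continuous_ereal_add_const, rotated]) simp
qed

lemma alift_inA: "inA \<pi> (alift \<pi> T X)"
  unfolding inA_def alift_def
proof
  fix \<sigma>
  have "0 \<le> enn2ereal (T (\<lambda>\<sigma>'. e2ennreal (X \<sigma>' + ereal (\<pi> \<sigma>'))) \<sigma>)" by simp
  then show "- ereal (\<pi> \<sigma>) \<le> enn2ereal (T (\<lambda>\<sigma>'. e2ennreal (X \<sigma>' + ereal (\<pi> \<sigma>'))) \<sigma>) - ereal (\<pi> \<sigma>)"
    by (cases "enn2ereal (T (\<lambda>\<sigma>'. e2ennreal (X \<sigma>' + ereal (\<pi> \<sigma>'))) \<sigma>)") auto
qed

lemma sup_continuous_aert_atomic: "atomic C \<Longrightarrow> sup_continuous (aert \<pi> C)"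
proof -
  assume "atomic C"
  then have "aert \<pi> C = alift \<pi> (ert C)" by (cases C) (simp_all add: fun_eq_iff)
  then show ?thesis
    using sup_continuous_alift[OF sup_continuous_ert_atomic[OF \<open>atomic C\<close>]] by simp
qed

section \<open>Least fixed points in the amortized lattice\<close>

lemma lfpA_lower: "inA \<pi> Y \<Longrightarrow> \<Phi> Y \<le> Y \<Longrightarrow> lfpA \<pi> \<Phi> \<le> Y"
  unfolding lfpA_def by (rule Inf_lower) simp

lemma inA_iff_le: "inA \<pi> Y \<longleftrightarrow> (\<lambda>\<sigma>. - ereal (\<pi> \<sigma>)) \<le> Y"
  by (simp add: inA_def le_fun_def)

lemma lfpA_inA: "inA \<pi> (lfpA \<pi> \<Phi>)"
  unfolding inA_iff_le lfpA_def by (rule Inf_greatest) (simp add: inA_iff_le)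

lemma lfpA_prefixed:
  assumes "mono \<Phi>"
  shows "\<Phi> (lfpA \<pi> \<Phi>) \<le> lfpA \<pi> \<Phi>"
proof -
  have "\<Phi> (lfpA \<pi> \<Phi>) \<le> Y" if "inA \<pi> Y" "\<Phi> Y \<le> Y" for Y
    using monoD[OF assms lfpA_lower[of \<pi> Y \<Phi>, OF that]] that(2) by (rule order_trans)
  then show ?thesis unfolding lfpA_def[of \<pi> \<Phi>] by (intro Inf_greatest) auto
qed

lemma lfpA_mono: "(\<And>Y. \<Phi> Y \<le> \<Psi> Y) \<Longrightarrow> lfpA \<pi> \<Phi> \<le> lfpA \<pi> \<Psi>"
  unfolding lfpA_def by (rule Inf_superset_mono) (auto intro: order_trans)

lemma lfpA_SUP:
  fixes \<Phi> :: "'a art \<Rightarrow> 'a art \<Rightarrow> 'a art" and X :: "nat \<Rightarrow> 'a art"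
  assumes mono: "\<And>X. mono (\<Phi> X)"
    and mono_param: "\<And>X X' Y. X \<le> X' \<Longrightarrow> \<Phi> X Y \<le> \<Phi> X' Y"
    and cont: "\<And>L. (\<And>i. inA \<pi> (L i)) \<Longrightarrow> incseq L \<Longrightarrow>
                 \<Phi> (SUP i. X i) (SUP i. L i) \<le> (SUP i. \<Phi> (X i) (L i))"
    and "incseq X"
  shows "lfpA \<pi> (\<Phi> (SUP i. X i)) = (SUP i. lfpA \<pi> (\<Phi> (X i)))"
proof (rule antisym)
  define L where "L i = lfpA \<pi> (\<Phi> (X i))" for i
  have L_inA: "inA \<pi> (L i)" for i
    unfolding L_def by (rule lfpA_inA)
  have "incseq L"
    unfolding L_def using \<open>incseq X\<close> by (intro monoI lfpA_mono mono_param) (rule monoD)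
  have "inA \<pi> (SUP i. L i)"
    using L_inA[of 0] unfolding inA_iff_le by (blast intro: order_trans SUP_upper)
  moreover have "\<Phi> (SUP i. X i) (SUP i. L i) \<le> (SUP i. L i)"
  proof -
    have "\<Phi> (SUP i. X i) (SUP i. L i) \<le> (SUP i. \<Phi> (X i) (L i))"
      using L_inA \<open>incseq L\<close> by (rule cont)
    also have "\<dots> \<le> (SUP i. L i)"
      unfolding L_def by (intro SUP_mono) (auto intro: lfpA_prefixed mono)
    finally show ?thesis .
  qed
  ultimately show "lfpA \<pi> (\<Phi> (SUP i. X i)) \<le> (SUP i. L i)"
    by (rule lfpA_lower)
  show "(SUP i. L i) \<le> lfpA \<pi> (\<Phi> (SUP i. X i))"
    unfolding L_def by (intro SUP_least lfpA_mono mono_param SUP_upper) simp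
qed

lemma ereal_convex_comb_lower_bound:
  assumes "0 \<le> p" "p \<le> 1" "ereal r \<le> a" "ereal r \<le> b"
  shows "ereal r \<le> ereal p * a + ereal (1 - p) * b"
proof -
  have "ereal r = ereal p * ereal r + ereal (1 - p) * ereal r"
    by (simp add: algebra_simps)
  also have "\<dots> \<le> ereal p * a + ereal (1 - p) * b"
    using assms by (intro add_mono ereal_mult_left_mono) auto
  finally show ?thesis .
qed

lemma SUP_ereal_lincomb:
  fixes a b :: "nat \<Rightarrow> ereal"
  assumes "0 \<le> p" "0 \<le> q" "incseq a" "incseq b" "\<And>i. a i \<noteq> -\<infinity>" "\<And>i. b i \<noteq> -\<infinity>"
  shows "ereal p * (SUP i. a i) + ereal q * (SUP i. b i) = (SUP i. ereal p * a i + ereal q * b i)"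
proof -
  have scaled_incseq: "incseq (\<lambda>i. ereal c * f i)" if "0 \<le> c" "incseq f" for c and f :: "nat \<Rightarrow> ereal"
    using that by (simp add: incseq_def ereal_mult_left_mono)
  have scaled_finite: "ereal c * x \<noteq> -\<infinity>" if "0 \<le> c" "x \<noteq> -\<infinity>" for c and x :: ereal
    using that by (cases x) auto
  have "ereal p * (SUP i. a i) + ereal q * (SUP i. b i) = (SUP i. ereal p * a i) + (SUP i. ereal q * b i)"
    using assms(1,2) by (simp add: Sup_ereal_mult_left')
  also have "\<dots> = (SUP i. ereal p * a i + ereal q * b i)"
    using assms by (intro SUP_ereal_add[symmetric] scaled_incseq scaled_finite)
  finally show ?thesis .
qed

lemma aert_inA: "wf_prog C \<Longrightarrow> inA \<pi> X \<Longrightarrow> inA \<pi> (aert \<pi> C X)"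
proof (induction C arbitrary: X)
  case (Tick e)
  show ?case unfolding inA_def
  proof
    fix \<sigma>
    have "- ereal (\<pi> \<sigma>) \<le> X \<sigma>" using Tick.prems(2) unfolding inA_def ..
    also have "\<dots> \<le> ereal (real (e (fst \<sigma>))) + X \<sigma>" by (simp add: add_increasing)
    finally show "- ereal (\<pi> \<sigma>) \<le> aert \<pi> (Tick e) X \<sigma>" by simp
  qed
next
  case (PChoice C1 p C2)
  show ?case unfolding inA_def
  proof
    fix \<sigma>
    have "inA \<pi> (aert \<pi> C1 X)" "inA \<pi> (aert \<pi> C2 X)"
      using PChoice by auto
    then have "- ereal (\<pi> \<sigma>) \<le> aert \<pi> C1 X \<sigma>" "- ereal (\<pi> \<sigma>) \<le> aert \<pi> C2 X \<sigma>"
      unfolding inA_def by blast+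
    then show "- ereal (\<pi> \<sigma>) \<le> aert \<pi> (PChoice C1 p C2) X \<sigma>"
      using PChoice.prems(1) by (auto intro!: ereal_convex_comb_lower_bound)
  qed
next
  case (If b C1 C2)
  then have "inA \<pi> (aert \<pi> C1 X)" "inA \<pi> (aert \<pi> C2 X)" by auto
  then show ?case unfolding inA_def by simp
qed (simp_all add: alift_inA lfpA_inA)

lemma mono_aert: "wf_prog C \<Longrightarrow> mono (aert \<pi> C)"
proof (induction C)
  case (Tick e)
  show ?case by (auto intro!: monoI le_funI add_left_mono dest: le_funD)
next
  case (PChoice C1 p C2)
  show ?case
  proof (intro monoI le_funI)
    fix X Y :: "'a art" and \<sigma> assume "X \<le> Y"
    then have "aert \<pi> C1 X \<sigma> \<le> aert \<pi> C1 Y \<sigma>" "aert \<pi> C2 X \<sigma> \<le> aert \<pi> C2 Y \<sigma>"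
      using PChoice by (auto dest: monoD le_funD)
    then show "aert \<pi> (PChoice C1 p C2) X \<sigma> \<le> aert \<pi> (PChoice C1 p C2) Y \<sigma>"
      using PChoice.prems by (auto intro!: add_mono ereal_mult_left_mono)
  qed
next
  case (While b C)
  show ?case
  proof (intro monoI)
    fix X Y :: "'a art" assume "X \<le> Y"
    then show "aert \<pi> (While b C) X \<le> aert \<pi> (While b C) Y"
      by (simp only: aert.simps) (rule lfpA_mono, auto simp: le_fun_def)
  qed
next
  case (If b C1 C2)
  show ?case
  proof (intro monoI le_funI)
    fix X Y :: "'a art" and \<sigma> assume "X \<le> Y"
    then show "aert \<pi> (If b C1 C2) X \<sigma> \<le> aert \<pi> (If b C1 C2) Y \<sigma>"
      using If by (auto dest: monoD le_funD)
  qed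
next
  case (Seq C1 C2)
  then show ?case by (simp add: mono_def)
qed (simp_all add: sup_continuous_mono sup_continuous_aert_atomic)

lemma aert_SUP:
  assumes "wf_prog C" "\<And>i. inA \<pi> (X i)" "incseq X"
  shows "aert \<pi> C (SUP i. X i) = (SUP i. aert \<pi> C (X i))"
  using assms
proof (induction C arbitrary: X)
  case (Tick e)
  show ?case by (simp add: fun_eq_iff image_comp SUP_ereal_add_right)
next
  case (PChoice C1 p C2)
  have wf: "wf_prog C1" "wf_prog C2" using PChoice.prems(1) by auto
  note IH = PChoice.IH(1)[OF wf(1) PChoice.prems(2,3)] PChoice.IH(2)[OF wf(2) PChoice.prems(2,3)]
  show ?case
  proof (rule ext)
    fix \<sigma> :: "'a state"
    define q where "q = real_of_rat (p (fst \<sigma>))"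
    have q: "0 \<le> q" "0 \<le> 1 - q"
      using PChoice.prems(1) by (auto simp: q_def)
    have chain: "incseq (\<lambda>i. aert \<pi> C' (X i) \<sigma>)" if "wf_prog C'" for C'
      using mono_aert[OF that] \<open>incseq X\<close> by (auto intro!: monoI dest: monoD le_funD)
    have finite: "aert \<pi> C' (X i) \<sigma> \<noteq> -\<infinity>" if "wf_prog C'" for C' i
    proof -
      have "- ereal (\<pi> \<sigma>) \<le> aert \<pi> C' (X i) \<sigma>"
        using aert_inA[OF that PChoice.prems(2)] unfolding inA_def ..
      then show ?thesis by auto
    qed
    show "aert \<pi> (PChoice C1 p C2) (SUP i. X i) \<sigma> = (SUP i. aert \<pi> (PChoice C1 p C2) (X i)) \<sigma>"
      using SUP_ereal_lincomb[OF q chain[OF wf(1)] chain[OF wf(2)] finite[OF wf(1)] finite[OF wf(2)]]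
      by (simp add: IH q_def image_comp)
  qed
next
  case (If b C1 C2)
  then show ?case by (simp add: fun_eq_iff image_comp)
next
  case (Seq C1 C2)
  have "inA \<pi> (aert \<pi> C2 (X i))" for i
    using Seq.prems by (simp add: aert_inA)
  moreover have "incseq (\<lambda>i. aert \<pi> C2 (X i))"
    using Seq.prems mono_aert[of C2 \<pi>] by (auto intro!: monoI dest: monoD)
  ultimately show ?case
    using Seq by simp
next
  case (While b C)
  have wf: "wf_prog C" using While.prems(1) by simp
  show ?case
    unfolding aert.simps
  proof (rule lfpA_SUP)
    show "mono (\<lambda>Y \<sigma>. if b (fst \<sigma>) then aert \<pi> C Y \<sigma> else X' \<sigma>)" for X'
    proof (intro monoI le_funI)
      fix Y Y' :: "'a art" and \<sigma> assume "Y \<le> Y'"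
      then have le: "aert \<pi> C Y \<le> aert \<pi> C Y'"
        by (rule monoD[OF mono_aert[OF wf]])
      show "(if b (fst \<sigma>) then aert \<pi> C Y \<sigma> else X' \<sigma>) \<le> (if b (fst \<sigma>) then aert \<pi> C Y' \<sigma> else X' \<sigma>)"
        using le_funD[OF le, of \<sigma>] by simp
    qed
    show "(\<lambda>\<sigma>. if b (fst \<sigma>) then aert \<pi> C Y \<sigma> else X' \<sigma>)
        \<le> (\<lambda>\<sigma>. if b (fst \<sigma>) then aert \<pi> C Y \<sigma> else X'' \<sigma>)" if "X' \<le> X''" for X' X'' Y
      using that by (simp add: le_fun_def)
    show "(\<lambda>\<sigma>. if b (fst \<sigma>) then aert \<pi> C (SUP i. L i) \<sigma> else (SUP i. X i) \<sigma>)
        \<le> (SUP i. (\<lambda>\<sigma>. if b (fst \<sigma>) then aert \<pi> C (L i) \<sigma> else X i \<sigma>))"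
      if "\<And>i. inA \<pi> (L i)" "incseq L" for L
    proof -
      have "aert \<pi> C (SUP i. L i) = (SUP i. aert \<pi> C (L i))"
        using While.IH[OF wf that] .
      then show ?thesis by (simp add: le_fun_def image_comp)
    qed
  qed (rule While.prems(3))
qed (metis atomic.simps sup_continuousD sup_continuous_aert_atomic)+

theorem mainTheorem3:
  fixes \<pi> :: "'v::finite state \<Rightarrow> real"
    and C :: "'v prog"
    and X :: "nat \<Rightarrow> 'v state \<Rightarrow> ereal"
  assumes "\<forall>\<sigma>. 0 \<le> \<pi> \<sigma>"
    and "wf_prog C"
    and "\<forall>i. inA \<pi> (X i)"
    and "incseq X"
  shows "aert \<pi> C (SUP i. X i) = (SUP i. aert \<pi> C (X i))"
  using assms(2-4) by (simp add: aert_SUP)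

end
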